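(* Let $\mathbf{T}$ and $\mathbf{T}'$ be distributive lattices and let $f:\mathbf{T}\to\mathbf{T}'$ be a morphism of distributive lattices. Let $\operatorname{Spec}(f):\operatorname{Spec}\mathbf{T}'\to\operatorname{Spec}\mathbf{T}$ be the dual map, $\mathfrak{q}\mapsto f^{-1}(\mathfrak{q})$. In classical mathematics, the following are equivalent. 1. $\operatorname{Spec}(f)$ is an open map. 2. There exists a map $\tilde f:\mathbf{T}'\to\mathbf{T}$ with the following properties: (a) for all $c\in\mathbf{T}$ and $b\in\mathbf{T}'$, $b\le f(c)\iff \tilde f(b)\le c$ (in particular $b\le f(\tilde f(b))$ and $\tilde f(b_1\vee b_2)=\tilde f(b_1)\vee\tilde f(b_2)$); (b) for all $a,c\in\mathbf{T}$ and $b\in\mathbf{T}'$, $f(a)\wedge b\le f(c)\iff a\wedge\tilde f(b)\le c$; (c) for all $a\in\mathbf{T}$ and $b\in\mathbf{T}'$, $\tilde f(f(a)\wedge b)=a\wedge\tilde f(b)$; (d) for all $a\in\mathbf{T}$, $\tilde f(f(a))=\tilde f(1)\wedge a$. 3. There exists a map $\tilde f:\mathbf{T}'\to\mathbf{T}$ satisfying property (b) above. 4. For every $b\in\mathbf{T}'$ the greatest lower bound $\bigwedge_{c\in\mathbf{T},\ b\le f(c)} c$ exists in $\mathbf{T}$, and, writing $\tilde f(b)$ for it, property (b) above holds.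
   Context: A prime ideal of a distributive lattice $\mathbf{T}\neq\mathbf{1}$ is an ideal whose complement is a filter; equivalently it corresponds to a lattice morphism $\mathbf{T}\to\mathbf{2}$. The spectrum $\operatorname{Spec}\mathbf{T}$ is the set of prime ideals of $\mathbf{T}$ with the topology having as basis of open sets the sets $\mathfrak{D}_{\mathbf{T}}(a)=\{\mathfrak{p}\in\operatorname{Spec}\mathbf{T}\mid a\notin\mathfrak{p}\}$ for $a\in\mathbf{T}$. A map is open if it sends open sets to open sets. *)

theory Defs
  imports "HOL-Analysis.Analysis"
begin

definition dlat_hom :: "('a::{distrib_lattice,bounded_lattice} \<Rightarrow> 'b::{distrib_lattice,bounded_lattice}) \<Rightarrow> bool" where
  "dlat_hom f \<longleftrightarrow> f bot = bot \<and> f top = top \<and>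
     (\<forall>x y. f (sup x y) = sup (f x) (f y)) \<and> (\<forall>x y. f (inf x y) = inf (f x) (f y))"

definition prime_ideal :: "'a::{distrib_lattice,bounded_lattice} set \<Rightarrow> bool" where
  "prime_ideal p \<longleftrightarrow> bot \<in> p \<and> (\<forall>x y. x \<in> p \<longrightarrow> y \<in> p \<longrightarrow> sup x y \<in> p)
     \<and> (\<forall>x y. x \<in> p \<longrightarrow> y \<le> x \<longrightarrow> y \<in> p)
     \<and> top \<notin> p \<and> (\<forall>x y. x \<notin> p \<longrightarrow> y \<notin> p \<longrightarrow> inf x y \<notin> p)"

definition Spec :: "'a::{distrib_lattice,bounded_lattice} set set" where
  "Spec = {p. prime_ideal p}"

definition DD :: "'a::{distrib_lattice,bounded_lattice} \<Rightarrow> 'a set set" where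
  "DD a = {p \<in> Spec. a \<notin> p}"

definition Spec_top :: "'a::{distrib_lattice,bounded_lattice} set topology" where
  "Spec_top = subtopology (topology_generated_by (range DD)) Spec"

definition Spec_map :: "('a \<Rightarrow> 'b) \<Rightarrow> 'b set \<Rightarrow> 'a set" where
  "Spec_map f q = f -` q"

end

theory Submission imports Defs begin

text \<open>
  Everything is governed by the images of the basic opens: Spec(f) is open iff each
  Spec(f)(D(b)) is a basic open D(g b), and a map g does this iff it satisfies the
  Frobenius reciprocity (b). The first step is a compactness argument; for the second,
  the prime ideal theorem shows that a prime p lies in Spec(f)(D(b)) iff no inequality
  f a \<sqinter> b \<le> f c holds with a \<notin> p and c \<in> p. Reciprocity at a = \<top> makes g left
  adjoint to f, and (a), (c), (d) and the description of g b as an infimum follow by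
  lattice algebra.
\<close>

definition lattice_ideal :: "'a::{distrib_lattice,bounded_lattice} set \<Rightarrow> bool" where
  "lattice_ideal I \<longleftrightarrow> bot \<in> I \<and> (\<forall>x y. x \<in> I \<longrightarrow> y \<in> I \<longrightarrow> sup x y \<in> I)
     \<and> (\<forall>x y. x \<in> I \<longrightarrow> y \<le> x \<longrightarrow> y \<in> I)"

definition lattice_filter :: "'a::{distrib_lattice,bounded_lattice} set \<Rightarrow> bool" where
  "lattice_filter F \<longleftrightarrow> top \<in> F \<and> (\<forall>x y. x \<in> F \<longrightarrow> y \<in> F \<longrightarrow> inf x y \<in> F)
     \<and> (\<forall>x y. x \<in> F \<longrightarrow> x \<le> y \<longrightarrow> y \<in> F)"

definition frobenius_adjoint :: "('a::lattice \<Rightarrow> 'b::lattice) \<Rightarrow> ('b \<Rightarrow> 'a) \<Rightarrow> bool" where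
  "frobenius_adjoint f g \<longleftrightarrow> (\<forall>a c b. inf (f a) b \<le> f c \<longleftrightarrow> inf a (g b) \<le> c)"

lemma lattice_ideal_Union_chain:
  assumes "C \<noteq> {}" and "subset.chain {J. lattice_ideal J} C"
  shows "lattice_ideal (\<Union>C)"
proof -
  have ideals: "\<And>J. J \<in> C \<Longrightarrow> lattice_ideal J"
    and comparable: "\<And>J K. J \<in> C \<Longrightarrow> K \<in> C \<Longrightarrow> J \<subseteq> K \<or> K \<subseteq> J"
    using assms(2) by (auto simp: subset.chain_def)
  have "sup x y \<in> \<Union>C" if xy: "x \<in> \<Union>C" "y \<in> \<Union>C" for x y
  proof -
    obtain J K where "J \<in> C" "K \<in> C" "x \<in> J" "y \<in> K" using xy by blast
    then obtain L where "L \<in> C" "x \<in> L" "y \<in> L" using comparable by blast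
    then show ?thesis using ideals[of L] by (auto simp: lattice_ideal_def)
  qed
  then show ?thesis
    using assms(1) ideals unfolding lattice_ideal_def by blast
qed

lemma lattice_ideal_join_element:
  assumes "lattice_ideal M"
  shows "lattice_ideal {z. \<exists>m\<in>M. z \<le> sup m x}"
  unfolding lattice_ideal_def
proof (intro conjI allI impI)
  show "bot \<in> {z. \<exists>m\<in>M. z \<le> sup m x}" using assms by (auto simp: lattice_ideal_def)
next
  fix u v assume "u \<in> {z. \<exists>m\<in>M. z \<le> sup m x}" "v \<in> {z. \<exists>m\<in>M. z \<le> sup m x}"
  then obtain m1 m2 where m: "m1 \<in> M" "m2 \<in> M" and uv: "u \<le> sup m1 x" "v \<le> sup m2 x" by auto
  have "sup m1 m2 \<in> M" using assms m by (auto simp: lattice_ideal_def)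
  moreover have "sup m1 x \<le> sup (sup m1 m2) x" "sup m2 x \<le> sup (sup m1 m2) x"
    by (intro sup_mono; simp)+
  then have "sup u v \<le> sup (sup m1 m2) x" using uv by (meson le_sup_iff order_trans)
  ultimately show "sup u v \<in> {z. \<exists>m\<in>M. z \<le> sup m x}" by blast
next
  fix u v assume "u \<in> {z. \<exists>m\<in>M. z \<le> sup m x}" "v \<le> u"
  then show "v \<in> {z. \<exists>m\<in>M. z \<le> sup m x}" using order_trans by blast
qed

lemma maximal_disjoint_ideal_is_prime:
  assumes M: "lattice_ideal M" and F: "lattice_filter F" and disjoint: "M \<inter> F = {}"
    and maximal: "\<And>J. lattice_ideal J \<Longrightarrow> M \<subseteq> J \<Longrightarrow> J \<inter> F = {} \<Longrightarrow> J = M"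
  shows "prime_ideal M"
proof -
  have meets_F: "\<exists>m\<in>M. sup m x \<in> F" if "x \<notin> M" for x
  proof (rule ccontr)
    assume avoids_F: "\<not> ?thesis"
    let ?J = "{z. \<exists>m\<in>M. z \<le> sup m x}"
    have "?J \<inter> F = {}" using avoids_F F by (auto simp: lattice_filter_def)
    moreover have "M \<subseteq> ?J" using sup_ge1 by blast
    ultimately have "?J = M" using maximal lattice_ideal_join_element[OF M] by blast
    moreover have "x \<in> ?J" using M by (auto simp: lattice_ideal_def intro: sup_ge2)
    ultimately show False using that by blast
  qed
  have "inf x y \<notin> M" if xy: "x \<notin> M" "y \<notin> M" for x y
  proof
    assume "inf x y \<in> M"
    obtain m1 m2 where m: "m1 \<in> M" "m2 \<in> M" "sup m1 x \<in> F" "sup m2 y \<in> F"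
      using meets_F xy by meson
    define m where "m = sup m1 m2"
    have "m \<in> M" using M m by (auto simp: lattice_ideal_def m_def)
    have "inf (sup m1 x) (sup m2 y) \<le> inf (sup m x) (sup m y)"
      unfolding m_def by (intro inf_mono sup_mono; simp)
    also have "\<dots> = sup m (inf x y)" by (simp add: sup_inf_distrib1)
    finally have "sup m (inf x y) \<in> F" using F m by (auto simp: lattice_filter_def)
    moreover have "sup m (inf x y) \<in> M"
      using M \<open>m \<in> M\<close> \<open>inf x y \<in> M\<close> by (auto simp: lattice_ideal_def)
    ultimately show False using disjoint by blast
  qed
  then show ?thesis
    using M F disjoint unfolding prime_ideal_def lattice_ideal_def lattice_filter_def by blast
qed

theorem prime_ideal_theorem:
  fixes I F :: "'a::{distrib_lattice,bounded_lattice} set"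
  assumes "lattice_ideal I" and F: "lattice_filter F" and "I \<inter> F = {}"
  shows "\<exists>p. prime_ideal p \<and> I \<subseteq> p \<and> p \<inter> F = {}"
proof -
  let ?A = "{J. lattice_ideal J \<and> I \<subseteq> J \<and> J \<inter> F = {}}"
  have "\<exists>M\<in>?A. \<forall>J\<in>?A. M \<subseteq> J \<longrightarrow> J = M"
  proof (rule subset_Zorn_nonempty)
    fix C assume C: "C \<noteq> {}" "subset.chain ?A C"
    then have "C \<subseteq> ?A" and "subset.chain {J. lattice_ideal J} C"
      by (auto simp: subset.chain_def)
    then have "lattice_ideal (\<Union>C)" using C(1) lattice_ideal_Union_chain by blast
    moreover have "I \<subseteq> \<Union>C" "\<Union>C \<inter> F = {}" using C(1) \<open>C \<subseteq> ?A\<close> by auto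
    ultimately show "\<Union>C \<in> ?A" by blast
  next
    show "?A \<noteq> {}" using assms by auto
  qed
  then obtain M where M: "M \<in> ?A" and maximal: "\<forall>J\<in>?A. M \<subseteq> J \<longrightarrow> J = M"
    by (rule bexE)
  have M_ideal: "lattice_ideal M" and "I \<subseteq> M" and M_disjoint: "M \<inter> F = {}" using M by auto
  have M_maximal: "J = M" if "lattice_ideal J" "M \<subseteq> J" "J \<inter> F = {}" for J
  proof -
    have "J \<in> ?A" using that \<open>I \<subseteq> M\<close> by blast
    then show ?thesis using that(2) maximal by blast
  qed
  have "prime_ideal M" by (rule maximal_disjoint_ideal_is_prime[OF M_ideal F M_disjoint M_maximal])
  then show ?thesis using \<open>I \<subseteq> M\<close> M_disjoint by blast
qed

lemma lattice_ideal_atMost: "lattice_ideal {..y}"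
  unfolding lattice_ideal_def using order_trans by fastforce

lemma lattice_filter_atLeast: "lattice_filter {x..}"
  unfolding lattice_filter_def using order_trans by fastforce

lemma prime_ideal_separation:
  fixes x y :: "'a::{distrib_lattice,bounded_lattice}"
  assumes "\<not> x \<le> y"
  shows "\<exists>p. prime_ideal p \<and> y \<in> p \<and> x \<notin> p"
proof -
  have "{..y} \<inter> {x..} = {}" using assms order.trans by auto
  from prime_ideal_theorem[OF lattice_ideal_atMost lattice_filter_atLeast this]
  obtain p where "prime_ideal p" "{..y} \<subseteq> p" "p \<inter> {x..} = {}" by (elim exE conjE)
  then show ?thesis by auto
qed

lemma dlat_hom_mono: "dlat_hom f \<Longrightarrow> x \<le> y \<Longrightarrow> f x \<le> f y"
  unfolding dlat_hom_def by (metis le_iff_sup)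

lemma prime_ideal_imp_lattice_ideal: "prime_ideal p \<Longrightarrow> lattice_ideal p"
  unfolding prime_ideal_def lattice_ideal_def by blast

lemma prime_ideal_down_closed: "prime_ideal p \<Longrightarrow> x \<in> p \<Longrightarrow> y \<le> x \<Longrightarrow> y \<in> p"
  unfolding prime_ideal_def by blast

lemma prime_ideal_inf_iff: "prime_ideal p \<Longrightarrow> inf x y \<in> p \<longleftrightarrow> x \<in> p \<or> y \<in> p"
  unfolding prime_ideal_def by (meson inf_le1 inf_le2)

lemma prime_ideal_sup_iff: "prime_ideal p \<Longrightarrow> sup x y \<in> p \<longleftrightarrow> x \<in> p \<and> y \<in> p"
  unfolding prime_ideal_def by (meson sup_ge1 sup_ge2)

lemma prime_ideal_vimage: "dlat_hom f \<Longrightarrow> prime_ideal q \<Longrightarrow> prime_ideal (f -` q)"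
  using dlat_hom_mono[of f] unfolding prime_ideal_def dlat_hom_def by auto

lemma lattice_ideal_down_image:
  assumes f: "dlat_hom f" and I: "lattice_ideal I"
  shows "lattice_ideal {z. \<exists>c\<in>I. z \<le> f c}"
  unfolding lattice_ideal_def
proof (intro conjI allI impI)
  show "bot \<in> {z. \<exists>c\<in>I. z \<le> f c}" using I by (auto simp: lattice_ideal_def)
next
  fix x y assume "x \<in> {z. \<exists>c\<in>I. z \<le> f c}" "y \<in> {z. \<exists>c\<in>I. z \<le> f c}"
  then obtain c1 c2 where c: "c1 \<in> I" "c2 \<in> I" "x \<le> f c1" "y \<le> f c2" by auto
  have "sup c1 c2 \<in> I" using I c by (auto simp: lattice_ideal_def)
  moreover have "sup x y \<le> f (sup c1 c2)"
    using f c by (auto simp: dlat_hom_def intro: le_supI1 le_supI2)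
  ultimately show "sup x y \<in> {z. \<exists>c\<in>I. z \<le> f c}" by blast
next
  fix x y assume "x \<in> {z. \<exists>c\<in>I. z \<le> f c}" "y \<le> x"
  then show "y \<in> {z. \<exists>c\<in>I. z \<le> f c}" using order_trans by blast
qed

lemma DD_subset_Spec: "DD a \<subseteq> Spec"
  by (auto simp: DD_def)

lemma DD_bot: "DD bot = {}"
  by (auto simp: DD_def Spec_def prime_ideal_def)

lemma DD_sup: "DD (sup a b) = DD a \<union> DD b"
  by (auto simp: DD_def Spec_def prime_ideal_sup_iff)

lemma DD_inf: "DD (inf a b) = DD a \<inter> DD b"
  by (auto simp: DD_def Spec_def prime_ideal_inf_iff)

lemma DD_mono: "a \<le> b \<Longrightarrow> DD a \<subseteq> DD b"
  by (metis DD_sup le_iff_sup sup.cobounded1)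

lemma generate_topology_on_DD_basis:
  "generate_topology_on (range DD) V \<Longrightarrow> p \<in> V \<Longrightarrow> \<exists>c. p \<in> DD c \<and> DD c \<subseteq> V"
proof (induction V arbitrary: p rule: generate_topology_on.induct)
  case (Int U V)
  then obtain c1 c2 where "p \<in> DD c1" "DD c1 \<subseteq> U" "p \<in> DD c2" "DD c2 \<subseteq> V" by blast
  then show ?case by (intro exI[of _ "inf c1 c2"]) (auto simp: DD_inf)
next
  case (UN K)
  then show ?case by blast
qed auto

lemma openin_Spec_top_iff: "openin Spec_top U \<longleftrightarrow> (\<forall>p\<in>U. \<exists>c. p \<in> DD c \<and> DD c \<subseteq> U)"
proof
  assume "openin Spec_top U"
  then obtain V where V: "generate_topology_on (range DD) V" "U = V \<inter> Spec"
    unfolding Spec_top_def openin_subtopology openin_topology_generated_by_iff by blast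
  then show "\<forall>p\<in>U. \<exists>c. p \<in> DD c \<and> DD c \<subseteq> U"
    using generate_topology_on_DD_basis DD_subset_Spec by (metis IntD1 le_inf_iff)
next
  assume basis: "\<forall>p\<in>U. \<exists>c. p \<in> DD c \<and> DD c \<subseteq> U"
  then have U: "U = \<Union>{DD c | c. DD c \<subseteq> U}" by blast
  have "generate_topology_on (range DD) (\<Union>{DD c | c. DD c \<subseteq> U})"
    by (rule generate_topology_on.UN) (auto intro: generate_topology_on.Basis)
  moreover have "U \<subseteq> Spec" using U DD_subset_Spec by blast
  ultimately show "openin Spec_top U"
    unfolding Spec_top_def openin_subtopology openin_topology_generated_by_iff using U by blast
qed

lemma openin_Spec_top_DD: "openin Spec_top (DD b)"
  unfolding openin_Spec_top_iff by blast

lemma Spec_map_image_DD_subset: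
  assumes "dlat_hom f" and "b \<le> f c"
  shows "Spec_map f ` DD b \<subseteq> DD c"
proof
  fix p assume "p \<in> Spec_map f ` DD b"
  then obtain q where q: "prime_ideal q" "b \<notin> q" "p = f -` q"
    by (auto simp: Spec_map_def DD_def Spec_def)
  then have "f c \<notin> q" using assms(2) prime_ideal_down_closed by blast
  then show "p \<in> DD c" using q prime_ideal_vimage[OF assms(1) q(1)] by (auto simp: DD_def Spec_def)
qed

lemma lattice_filter_inf_image_compl:
  assumes f: "dlat_hom f" and p: "prime_ideal p"
  shows "lattice_filter {z. \<exists>a. a \<notin> p \<and> inf (f a) b \<le> z}"
  unfolding lattice_filter_def
proof (intro conjI allI impI)
  show "top \<in> {z. \<exists>a. a \<notin> p \<and> inf (f a) b \<le> z}"
    using p by (auto simp: prime_ideal_def)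
next
  fix x y assume "x \<in> {z. \<exists>a. a \<notin> p \<and> inf (f a) b \<le> z}" "y \<in> {z. \<exists>a. a \<notin> p \<and> inf (f a) b \<le> z}"
  then obtain a1 a2 where a: "a1 \<notin> p" "a2 \<notin> p" "inf (f a1) b \<le> x" "inf (f a2) b \<le> y" by auto
  have "inf a1 a2 \<notin> p" using p a prime_ideal_inf_iff by blast
  moreover have "inf (f (inf a1 a2)) b = inf (inf (f a1) b) (inf (f a2) b)"
    using f by (simp add: dlat_hom_def inf_aci)
  then have "inf (f (inf a1 a2)) b \<le> inf x y" using a by (simp add: le_infI1 le_infI2)
  ultimately show "inf x y \<in> {z. \<exists>a. a \<notin> p \<and> inf (f a) b \<le> z}" by blast
next
  fix x y assume "x \<in> {z. \<exists>a. a \<notin> p \<and> inf (f a) b \<le> z}" "x \<le> y"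
  then show "y \<in> {z. \<exists>a. a \<notin> p \<and> inf (f a) b \<le> z}" using order_trans by blast
qed

lemma mem_Spec_map_image_DD_iff:
  assumes f: "dlat_hom f" and p: "prime_ideal p"
  shows "p \<in> Spec_map f ` DD b \<longleftrightarrow> (\<forall>a c. a \<notin> p \<longrightarrow> c \<in> p \<longrightarrow> \<not> inf (f a) b \<le> f c)"
proof
  assume "p \<in> Spec_map f ` DD b"
  then obtain q where q: "prime_ideal q" "b \<notin> q" "p = f -` q"
    by (auto simp: Spec_map_def DD_def Spec_def)
  show "\<forall>a c. a \<notin> p \<longrightarrow> c \<in> p \<longrightarrow> \<not> inf (f a) b \<le> f c"
  proof (intro allI impI)
    fix a c assume "a \<notin> p" "c \<in> p"
    then have "inf (f a) b \<notin> q" "f c \<in> q" using q prime_ideal_inf_iff by auto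
    then show "\<not> inf (f a) b \<le> f c" using q(1) prime_ideal_down_closed by blast
  qed
next
  assume no_ineq: "\<forall>a c. a \<notin> p \<longrightarrow> c \<in> p \<longrightarrow> \<not> inf (f a) b \<le> f c"
  let ?I = "{z. \<exists>c\<in>p. z \<le> f c}" and ?F = "{z. \<exists>a. a \<notin> p \<and> inf (f a) b \<le> z}"
  have "?I \<inter> ?F = {}" using no_ineq by (auto dest: order_trans)
  then obtain q where q: "prime_ideal q" "?I \<subseteq> q" "q \<inter> ?F = {}"
    using prime_ideal_theorem lattice_filter_inf_image_compl[OF f p]
      lattice_ideal_down_image[OF f prime_ideal_imp_lattice_ideal[OF p]] by blast
  have "p \<subseteq> f -` q" using q(2) by auto
  moreover have "f -` q \<subseteq> p"
  proof
    fix a assume "a \<in> f -` q"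
    moreover have "a \<notin> p \<Longrightarrow> f a \<in> ?F" by auto
    ultimately show "a \<in> p" using q(3) by blast
  qed
  ultimately have "p = Spec_map f q" by (auto simp: Spec_map_def)
  moreover have "b \<in> ?F"
    using f p by (intro CollectI exI[of _ top]) (simp add: dlat_hom_def prime_ideal_def)
  then have "q \<in> DD b" using q(1,3) unfolding DD_def Spec_def by blast
  ultimately show "p \<in> Spec_map f ` DD b" by blast
qed

lemma Spec_map_image_DD_if_frobenius_adjoint:
  assumes f: "dlat_hom f" and frob: "frobenius_adjoint f g"
  shows "Spec_map f ` DD b = DD (g b)"
proof
  have "inf (f top) b \<le> f (g b)" using frob by (simp add: frobenius_adjoint_def)
  then have "b \<le> f (g b)" using f by (simp add: dlat_hom_def)
  then show "Spec_map f ` DD b \<subseteq> DD (g b)" by (rule Spec_map_image_DD_subset[OF f])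
next
  show "DD (g b) \<subseteq> Spec_map f ` DD b"
  proof
    fix p assume "p \<in> DD (g b)"
    then have p: "prime_ideal p" "g b \<notin> p" by (auto simp: DD_def Spec_def)
    have "\<not> inf (f a) b \<le> f c" if "a \<notin> p" "c \<in> p" for a c
    proof
      assume "inf (f a) b \<le> f c"
      then have "inf a (g b) \<le> c" using frob by (simp add: frobenius_adjoint_def)
      then have "inf a (g b) \<in> p" using p(1) \<open>c \<in> p\<close> prime_ideal_down_closed by blast
      then show False using p that prime_ideal_inf_iff by blast
    qed
    then show "p \<in> Spec_map f ` DD b" by (simp add: mem_Spec_map_image_DD_iff[OF f p(1)])
  qed
qed

lemma frobenius_adjoint_if_Spec_map_image_DD:
  assumes f: "dlat_hom f" and image: "\<And>b. Spec_map f ` DD b = DD (g b)"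
  shows "frobenius_adjoint f g"
  unfolding frobenius_adjoint_def
proof (intro allI iffI)
  fix a b c assume le: "inf (f a) b \<le> f c"
  show "inf a (g b) \<le> c"
  proof (rule ccontr)
    assume "\<not> inf a (g b) \<le> c"
    then obtain p where p: "prime_ideal p" "c \<in> p" "inf a (g b) \<notin> p"
      using prime_ideal_separation by blast
    then have "a \<notin> p" "p \<in> DD (g b)" using prime_ideal_inf_iff by (auto simp: DD_def Spec_def)
    then have "p \<in> Spec_map f ` DD b" using image by simp
    then show False using le \<open>a \<notin> p\<close> p(2) mem_Spec_map_image_DD_iff[OF f p(1)] by simp
  qed
next
  fix a b c assume le: "inf a (g b) \<le> c"
  show "inf (f a) b \<le> f c"
  proof (rule ccontr)
    assume "\<not> inf (f a) b \<le> f c"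
    then obtain q where q: "prime_ideal q" "f c \<in> q" "inf (f a) b \<notin> q"
      using prime_ideal_separation by blast
    then have "f a \<notin> q" "q \<in> DD b" using prime_ideal_inf_iff by (auto simp: DD_def Spec_def)
    then have "f -` q \<in> DD (g b)" using image[of b] by (auto simp: Spec_map_def)
    then have "inf a (g b) \<notin> f -` q"
      using \<open>f a \<notin> q\<close> prime_ideal_inf_iff[OF prime_ideal_vimage[OF f q(1)]] by (auto simp: DD_def)
    then show False
      using le q(2) prime_ideal_down_closed[OF prime_ideal_vimage[OF f q(1)]] by auto
  qed
qed

lemma lattice_ideal_Collect_DD_subset:
  "lattice_ideal {c. DD c \<subseteq> U}"
  unfolding lattice_ideal_def
proof (intro conjI allI impI)
  fix x y assume "x \<in> {c. DD c \<subseteq> U}" "y \<le> x"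
  then show "y \<in> {c. DD c \<subseteq> U}" using DD_mono by (metis mem_Collect_eq subset_trans)
qed (simp_all add: DD_bot DD_sup)

text \<open>The compactness of basic opens enters here, through the prime ideal theorem.\<close>

lemma open_map_Spec_map_image_DD:
  fixes f :: "'a::{distrib_lattice,bounded_lattice} \<Rightarrow> 'b::{distrib_lattice,bounded_lattice}"
  assumes f: "dlat_hom f"
    and open_f: "open_map (Spec_top :: 'b set topology) (Spec_top :: 'a set topology) (Spec_map f)"
  shows "\<exists>c. Spec_map f ` DD b = DD c"
proof -
  let ?U = "Spec_map f ` DD b"
  have "openin Spec_top ?U"
    using open_f[unfolded open_map_def, rule_format, OF openin_Spec_top_DD] .
  have "\<exists>c. DD c \<subseteq> ?U \<and> b \<le> f c"
  proof (rule ccontr)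
    assume none: "\<not> ?thesis"
    let ?I = "{z. \<exists>c\<in>{c. DD c \<subseteq> ?U}. z \<le> f c}"
    have "False" if "DD c \<subseteq> ?U" "z \<le> f c" "b \<le> z" for c z
      using none that order.trans by metis
    then have "?I \<inter> {b..} = {}" by (auto simp: disjoint_iff)
    from prime_ideal_theorem[OF lattice_ideal_down_image[OF f lattice_ideal_Collect_DD_subset]
        lattice_filter_atLeast this]
    obtain q where q: "prime_ideal q" "?I \<subseteq> q" "q \<inter> {b..} = {}" by (elim exE conjE)
    then have "q \<in> DD b" by (auto simp: DD_def Spec_def)
    then have "Spec_map f q \<in> ?U" by (rule imageI)
    with \<open>openin Spec_top ?U\<close> have "\<exists>c. Spec_map f q \<in> DD c \<and> DD c \<subseteq> ?U"
      unfolding openin_Spec_top_iff by (rule bspec)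
    then obtain c where c: "Spec_map f q \<in> DD c" "DD c \<subseteq> ?U" by (elim exE conjE)
    then have "f c \<in> ?I" by auto
    with q(2) have "f c \<in> q" by (rule subsetD)
    then show False using c(1) by (simp add: DD_def Spec_map_def)
  qed
  then obtain c where "DD c \<subseteq> ?U" "b \<le> f c" by blast
  then have "?U = DD c" using Spec_map_image_DD_subset[OF f] by (simp add: subset_antisym)
  then show ?thesis by blast
qed

lemma open_map_Spec_map_iff_frobenius_adjoint:
  fixes f :: "'a::{distrib_lattice,bounded_lattice} \<Rightarrow> 'b::{distrib_lattice,bounded_lattice}"
  assumes f: "dlat_hom f"
  shows "open_map (Spec_top :: 'b set topology) (Spec_top :: 'a set topology) (Spec_map f)
    \<longleftrightarrow> (\<exists>g. frobenius_adjoint f g)"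
proof
  assume "open_map (Spec_top :: 'b set topology) (Spec_top :: 'a set topology) (Spec_map f)"
  then obtain g where "\<And>b. Spec_map f ` DD b = DD (g b)"
    using open_map_Spec_map_image_DD[OF f] by metis
  then show "\<exists>g. frobenius_adjoint f g" using frobenius_adjoint_if_Spec_map_image_DD[OF f] by blast
next
  assume "\<exists>g. frobenius_adjoint f g"
  then obtain g where image: "\<And>b. Spec_map f ` DD b = DD (g b)"
    using Spec_map_image_DD_if_frobenius_adjoint[OF f] by blast
  show "open_map (Spec_top :: 'b set topology) (Spec_top :: 'a set topology) (Spec_map f)"
    unfolding open_map_def openin_Spec_top_iff
  proof (intro allI impI ballI)
    fix U p assume U: "\<forall>q\<in>U. \<exists>b. q \<in> DD b \<and> DD b \<subseteq> U" and "p \<in> Spec_map f ` U"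
    then obtain q b where "p = Spec_map f q" "q \<in> DD b" "DD b \<subseteq> U" by blast
    then have "p \<in> DD (g b)" "DD (g b) \<subseteq> Spec_map f ` U"
      using image[of b] by (auto intro: image_mono[THEN subsetD])
    then show "\<exists>c. p \<in> DD c \<and> DD c \<subseteq> Spec_map f ` U" by blast
  qed
qed

context
  fixes f :: "'a::bounded_lattice \<Rightarrow> 'b::bounded_lattice" and g :: "'b \<Rightarrow> 'a"
  assumes f_top: "f top = top" and frob: "frobenius_adjoint f g"
begin

lemma frobenius_adjoint_galois: "b \<le> f c \<longleftrightarrow> g b \<le> c"
  using frob f_top unfolding frobenius_adjoint_def by (metis inf_top_left)

lemma frobenius_adjoint_inf: "g (inf (f a) b) = inf a (g b)"
proof (rule order.antisym)
  show "g (inf (f a) b) \<le> inf a (g b)"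
    using frob by (simp add: frobenius_adjoint_def frobenius_adjoint_galois[symmetric])
  show "inf a (g b) \<le> g (inf (f a) b)"
    using frob frobenius_adjoint_galois unfolding frobenius_adjoint_def by blast
qed

lemma frobenius_adjoint_comp: "g (f a) = inf (g top) a"
  using frobenius_adjoint_inf[of a top] by (simp add: inf_commute)

lemma frobenius_adjoint_is_Inf:
  "(\<forall>c. b \<le> f c \<longrightarrow> g b \<le> c) \<and> (\<forall>d. (\<forall>c. b \<le> f c \<longrightarrow> d \<le> c) \<longrightarrow> d \<le> g b)"
  using frobenius_adjoint_galois by blast

end

theorem theorem8:
  fixes f :: "'a::{distrib_lattice,bounded_lattice} \<Rightarrow> 'b::{distrib_lattice,bounded_lattice}"
  assumes "dlat_hom f"
  shows "(open_map (Spec_top :: 'b set topology) (Spec_top :: 'a set topology) (Spec_map f)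
           \<longleftrightarrow> (\<exists>ft :: 'b \<Rightarrow> 'a.
                 (\<forall>c b. b \<le> f c \<longleftrightarrow> ft b \<le> c)
               \<and> (\<forall>a c b. inf (f a) b \<le> f c \<longleftrightarrow> inf a (ft b) \<le> c)
               \<and> (\<forall>a b. ft (inf (f a) b) = inf a (ft b))
               \<and> (\<forall>a. ft (f a) = inf (ft top) a)))
         \<and> ((\<exists>ft :: 'b \<Rightarrow> 'a.
                 (\<forall>c b. b \<le> f c \<longleftrightarrow> ft b \<le> c)
               \<and> (\<forall>a c b. inf (f a) b \<le> f c \<longleftrightarrow> inf a (ft b) \<le> c)
               \<and> (\<forall>a b. ft (inf (f a) b) = inf a (ft b))
               \<and> (\<forall>a. ft (f a) = inf (ft top) a))
         \<longleftrightarrow> (\<exists>ft :: 'b \<Rightarrow> 'a. \<forall>a c b. inf (f a) b \<le> f c \<longleftrightarrow> inf a (ft b) \<le> c))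
         \<and> ((\<exists>ft :: 'b \<Rightarrow> 'a. \<forall>a c b. inf (f a) b \<le> f c \<longleftrightarrow> inf a (ft b) \<le> c)
         \<longleftrightarrow> (\<exists>ft :: 'b \<Rightarrow> 'a.
                 (\<forall>b. (\<forall>c. b \<le> f c \<longrightarrow> ft b \<le> c)
                    \<and> (\<forall>d. (\<forall>c. b \<le> f c \<longrightarrow> d \<le> c) \<longrightarrow> d \<le> ft b))
               \<and> (\<forall>a c b. inf (f a) b \<le> f c \<longleftrightarrow> inf a (ft b) \<le> c)))"
proof -
  have f_top: "f top = top" using assms by (simp add: dlat_hom_def)
  have adjoint_iff: "(\<exists>g. (\<forall>c b. b \<le> f c \<longleftrightarrow> g b \<le> c) \<and> frobenius_adjoint f g
      \<and> (\<forall>a b. g (inf (f a) b) = inf a (g b)) \<and> (\<forall>a. g (f a) = inf (g top) a))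
    \<longleftrightarrow> (\<exists>g. frobenius_adjoint f g)"
    using frobenius_adjoint_galois[of f, OF f_top] frobenius_adjoint_inf[of f, OF f_top]
      frobenius_adjoint_comp[of f, OF f_top] by metis
  have Inf_iff: "(\<exists>g. frobenius_adjoint f g) \<longleftrightarrow> (\<exists>g. (\<forall>b. (\<forall>c. b \<le> f c \<longrightarrow> g b \<le> c)
      \<and> (\<forall>d. (\<forall>c. b \<le> f c \<longrightarrow> d \<le> c) \<longrightarrow> d \<le> g b)) \<and> frobenius_adjoint f g)"
    using frobenius_adjoint_is_Inf[of f, OF f_top] by metis
  show ?thesis
    unfolding frobenius_adjoint_def[symmetric]
    using open_map_Spec_map_iff_frobenius_adjoint[OF assms] adjoint_iff Inf_iff by simp
qed

end
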